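(* Let $V$ be a Seifert matrix and let $\omega,\omega'$ be unit complex numbers that are roots of the same irreducible polynomial over $\mathbb{Q}$. Then $\sigma_\omega(V)\equiv\sigma_{\omega'}(V)\pmod 2$. In particular, if $\omega_p\in S$ is a root of an irreducible rational polynomial having another root $\omega\in S$, no Seifert matrix $V$ (metabolic or not) can have $\sigma_{\omega_p}(V)$ odd while $\sigma_{\omega}(V)=0$.
   Context: A Seifert matrix is a square integral matrix $V$ with $\det(V-V^T)=\pm1$; for a unit complex number $\omega$, $\sigma_\omega(V)$ is the signature of the Hermitian matrix $(1-\omega)V+(1-\bar\omega)V^T$. $S$ is the set of unit complex numbers with positive imaginary part. *)

theory Defs
  imports "Jordan_Normal_Form.Char_Poly" "HOL-Computational_Algebra.Polynomial"
begin

definition seifert_matrix :: "int mat \<Rightarrow> bool" where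
  "seifert_matrix V \<longleftrightarrow> V \<in> carrier_mat (dim_row V) (dim_row V) \<and>
     det (V - transpose_mat V) \<in> {1, -1}"

definition signature :: "complex mat \<Rightarrow> int" where
  "signature H =
     int (\<Sum>x\<in>{x. poly (char_poly H) x = 0 \<and> x \<in> \<real> \<and> Re x > 0}. order x (char_poly H))
   - int (\<Sum>x\<in>{x. poly (char_poly H) x = 0 \<and> x \<in> \<real> \<and> Re x < 0}. order x (char_poly H))"

definition seifert_form :: "complex \<Rightarrow> int mat \<Rightarrow> complex mat" where
  "seifert_form w V = (1 - w) \<cdot>\<^sub>m map_mat of_int V
                     + (1 - cnj w) \<cdot>\<^sub>m map_mat of_int (transpose_mat V)"

definition tristram_levine_sig :: "complex \<Rightarrow> int mat \<Rightarrow> int" where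
  "tristram_levine_sig w V = signature (seifert_form w V)"

definition S_set :: "complex set" where
  "S_set = {w. norm w = 1 \<and> Im w > 0}"

end

theory Submission
  imports Defs "HOL-Computational_Algebra.Field_as_Ring" "Jordan_Normal_Form.Jordan_Normal_Form_Existence"
begin

text \<open>The eigenvalues of the Hermitian matrix H_w = (1 - w) V + (1 - conj w) V^T are real,
  so its signature is congruent mod 2 to n minus the nullity of H_w, the multiplicity of the
  eigenvalue 0. For |w| = 1 we have w H_w = A(w) for the matrix A(t) = - V^T + t (V + V^T) - t^2 V
  over \<rat>[t]. Hence the nullity of H_w is the index of the first coefficient of the
  characteristic polynomial of A(t) that does not vanish at t = w. These coefficients are rational
  polynomials in t, and two roots of the same irreducible rational polynomial annihilate exactly the
  same rational polynomials, so the nullity, and with it the signature mod 2, agrees at w and w'.\<close>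

definition hermitian :: "'a::conjugate mat \<Rightarrow> bool" where
  "hermitian A \<longleftrightarrow> transpose_mat A = map_mat conjugate A"

lemma conjugate_mult_mat_vec:
  fixes A :: "'a::conjugatable_ring mat"
  assumes "v \<in> carrier_vec (dim_col A)"
  shows "conjugate (A *\<^sub>v v) = map_mat conjugate A *\<^sub>v conjugate v"
proof (rule eq_vecI)
  fix i assume "i < dim_vec (map_mat conjugate A *\<^sub>v conjugate v)"
  then have "i < dim_row A" by simp
  moreover have "row (map_mat conjugate A) i = conjugate (row A i)" if "i < dim_row A"
    using that by (auto simp: row_def)
  ultimately show "conjugate (A *\<^sub>v v) $ i = (map_mat conjugate A *\<^sub>v conjugate v) $ i"
    using assms by (simp add: conjugate_sprod_vec[of _ "dim_col A"])
qed simp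

lemma hermitian_eigenvalue_self_conjugate:
  fixes A :: "'a::conjugatable_ordered_field mat"
  assumes herm: "hermitian A" and ev: "eigenvalue A a"
  shows "conjugate a = a"
proof -
  obtain v where v: "eigenvector A v a" using ev unfolding eigenvalue_def by blast
  define n where "n = dim_row A"
  have A: "A \<in> carrier_mat n n"
    using herm unfolding hermitian_def n_def
    by (metis carrier_mat_triv index_map_mat(3) index_transpose_mat(3))
  have vn: "v \<in> carrier_vec n" "v \<noteq> 0\<^sub>v n" and Av: "A *\<^sub>v v = a \<cdot>\<^sub>v v"
    using v unfolding eigenvector_def n_def by auto
  have "a * (v \<bullet>c v) = (A *\<^sub>v v) \<bullet>c v"
    using vn by (simp add: Av)
  also have "\<dots> = (transpose_mat (transpose_mat A) *\<^sub>v v) \<bullet> conjugate v"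
    by simp
  also have "\<dots> = v \<bullet> (transpose_mat A *\<^sub>v conjugate v)"
    using A vn by (intro transpose_vec_mult_scalar) auto
  also have "\<dots> = v \<bullet>c (A *\<^sub>v v)"
    using herm A vn unfolding hermitian_def by (simp add: conjugate_mult_mat_vec)
  also have "\<dots> = conjugate a * (v \<bullet>c v)"
    using vn by (simp add: Av conjugate_smult_vec)
  finally have "a * (v \<bullet>c v) = conjugate a * (v \<bullet>c v)" .
  moreover have "v \<bullet>c v \<noteq> 0"
    using vn by simp
  ultimately show ?thesis by simp
qed

lemma order_prod_linear:
  "order x (\<Prod>a\<leftarrow>as. [:- a, 1:]) = count_list as (x::'a::idom)"
proof (induction as)
  case Nil
  then show ?case by (simp add: order_0I)
next
  case (Cons a as)
  have "(\<Prod>a\<leftarrow>as. [:- a, 1:]) \<noteq> (0::'a poly)"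
    by (auto simp: prod_list_zero_iff)
  then have "order x ([:- a, 1:] * (\<Prod>a\<leftarrow>as. [:- a, 1:]))
      = order x [:- a, 1:] + order x (\<Prod>a\<leftarrow>as. [:- a, 1:])"
    by (intro order_mult) (metis mult_eq_0_iff pCons_eq_0_iff one_neq_zero)
  moreover have "order x [:- a, 1:] = (if x = a then 1 else 0)"
    using order_power_n_n[of a 1] by (auto intro!: order_0I)
  ultimately show ?case using Cons by simp
qed

lemma sum_order_prod_linear:
  fixes as :: "'a::idom list"
  shows "(\<Sum>x\<in>{x. poly (\<Prod>a\<leftarrow>as. [:- a, 1:]) x = 0 \<and> Q x}. order x (\<Prod>a\<leftarrow>as. [:- a, 1:]))
     = length (filter Q as)"
proof -
  have roots: "{x. poly (\<Prod>a\<leftarrow>as. [:- a, 1:]) x = 0 \<and> Q x} = set (filter Q as)"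
    by (auto simp: poly_prod_list prod_list_zero_iff)
  have "(\<Sum>x\<in>set (filter Q as). count_list as x) = (\<Sum>x\<in>set (filter Q as). count_list (filter Q as) x)"
    by (intro sum.cong) (auto simp: count_list_eq_length_filter filter_filter intro!: arg_cong[where f=length] filter_cong)
  also have "\<dots> = length (filter Q as)"
    by (rule sum_count_set) simp_all
  finally show ?thesis unfolding roots order_prod_linear .
qed

lemma length_eq_count_sign_filters:
  assumes "\<And>a. a \<in> set as \<Longrightarrow> a \<in> \<real>"
  shows "length as = length (filter (\<lambda>x. x \<in> \<real> \<and> Re x > 0) as)
    + length (filter (\<lambda>x. x \<in> \<real> \<and> Re x < 0) as) + count_list as 0"
  using assms by (induction as) (auto simp: complex_is_Real_iff complex_eq_iff)

lemma signature_hermitian_mod_2: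
  fixes H :: "complex mat"
  assumes H: "H \<in> carrier_mat n n" and herm: "hermitian H"
  shows "signature H mod 2 = (int n - int (order 0 (char_poly H))) mod 2"
proof -
  obtain as where cp: "char_poly H = (\<Prod>a\<leftarrow>as. [:- a, 1:])" and len: "length as = n"
    using char_poly_factorized[OF H] by blast
  have "a \<in> \<real>" if "a \<in> set as" for a
  proof -
    have "poly (char_poly H) a = 0"
      using that by (simp add: cp poly_prod_list prod_list_zero_iff)
    then have "eigenvalue H a"
      using eigenvalue_root_char_poly[OF H] by simp
    then show ?thesis
      using hermitian_eigenvalue_self_conjugate[OF herm] by (simp add: Reals_cnj_iff)
  qed
  then have "int n = length (filter (\<lambda>x. x \<in> \<real> \<and> Re x > 0) as)
      + length (filter (\<lambda>x. x \<in> \<real> \<and> Re x < 0) as) + order 0 (char_poly H)"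
    using length_eq_count_sign_filters len by (simp add: cp order_prod_linear)
  moreover have "signature H = int (length (filter (\<lambda>x. x \<in> \<real> \<and> Re x > 0) as))
      - length (filter (\<lambda>x. x \<in> \<real> \<and> Re x < 0) as)"
    unfolding signature_def cp sum_order_prod_linear ..
  ultimately have "int n - int (order 0 (char_poly H))
      = signature H + 2 * int (length (filter (\<lambda>x. x \<in> \<real> \<and> Re x < 0) as))"
    by simp
  then show ?thesis by simp
qed

lemma comm_ring_hom_poly_of_rat:
  "comm_ring_hom (\<lambda>q. poly (map_poly of_rat q) (x::'a::field_char_0))"
proof -
  interpret of_rat_poly: map_poly_comm_ring_hom "of_rat :: rat \<Rightarrow> 'a" ..
  show ?thesis
    by unfold_locales (simp_all add: of_rat_poly.hom_add of_rat_poly.hom_mult)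
qed

lemma irreducible_dvd_of_common_root:
  fixes p q :: "rat poly" and x :: "'a::field_char_0"
  assumes "irreducible p"
    and "poly (map_poly of_rat p) x = 0" and "poly (map_poly of_rat q) x = 0"
  shows "p dvd q"
proof (rule ccontr)
  interpret ev: comm_ring_hom "\<lambda>q. poly (map_poly of_rat q) x"
    by (rule comm_ring_hom_poly_of_rat)
  assume "\<not> p dvd q"
  then have "coprime p q"
    by (intro prime_elem_imp_coprime irreducible_imp_prime_elem assms(1))
  then obtain r s where "r * p + s * q = 1"
    by (metis bezout_coefficients_fst_snd coprime_imp_gcd_eq_1)
  moreover have "poly (map_poly of_rat (r * p + s * q)) x = 0"
    using assms(2,3) by (simp add: ev.hom_add ev.hom_mult)
  ultimately show False by simp
qed

lemma root_iff_root_of_irreducible: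
  fixes p :: "rat poly" and x y :: "'a::field_char_0"
  assumes p: "irreducible p"
    and x: "poly (map_poly of_rat p) x = 0" and y: "poly (map_poly of_rat p) y = 0"
  shows "poly (map_poly of_rat q) x = 0 \<longleftrightarrow> poly (map_poly of_rat q) y = 0"
proof -
  have "poly (map_poly of_rat q) z = 0"
    if "poly (map_poly of_rat p) z = 0" "p dvd q" for z :: 'a
  proof -
    interpret ev: comm_ring_hom "\<lambda>q. poly (map_poly of_rat q) z"
      by (rule comm_ring_hom_poly_of_rat)
    from \<open>p dvd q\<close> obtain r where "q = p * r" ..
    then show ?thesis using that(1) by (simp add: ev.hom_mult)
  qed
  then show ?thesis
    using irreducible_dvd_of_common_root[OF p] x y by metis
qed

lemma order_0_cong:
  fixes f g :: "'a::idom poly"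
  assumes "f \<noteq> 0" "g \<noteq> 0" "\<And>i. coeff f i = 0 \<longleftrightarrow> coeff g i = 0"
  shows "order 0 f = order 0 g"
proof -
  have "m \<le> order 0 f \<longleftrightarrow> m \<le> order 0 g" for m
    using monom_1_dvd_iff[OF assms(1), of m] monom_1_dvd_iff[OF assms(2), of m]
      monom_1_dvd_iff'[of m f] monom_1_dvd_iff'[of m g] assms(3) by auto
  then show ?thesis by (meson le_antisym order_refl)
qed

lemma hermitian_seifert_form:
  assumes "V \<in> carrier_mat n n"
  shows "hermitian (seifert_form w V)"
  unfolding hermitian_def
  by (rule eq_matI) (use assms in \<open>auto simp: seifert_form_def\<close>)

definition seifert_poly_mat :: "int mat \<Rightarrow> rat poly mat" where
  "seifert_poly_mat V = mat (dim_row V) (dim_row V)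
     (\<lambda>(i, j). [: - of_int (V $$ (j, i)), of_int (V $$ (i, j) + V $$ (j, i)), - of_int (V $$ (i, j)) :])"

lemma seifert_poly_mat_eval:
  assumes V: "V \<in> carrier_mat n n" and w: "norm w = 1"
  shows "map_mat (\<lambda>q. poly (map_poly of_rat q) w) (seifert_poly_mat V) = w \<cdot>\<^sub>m seifert_form w V"
proof (rule eq_matI)
  have "w * cnj w = 1"
    using complex_norm_square[of w] w by simp
  then show "map_mat (\<lambda>q. poly (map_poly of_rat q) w) (seifert_poly_mat V) $$ (i, j)
      = (w \<cdot>\<^sub>m seifert_form w V) $$ (i, j)"
    if "i < dim_row (w \<cdot>\<^sub>m seifert_form w V)" "j < dim_col (w \<cdot>\<^sub>m seifert_form w V)" for i j
    using that V
    by (simp add: seifert_poly_mat_def seifert_form_def Polynomial.map_poly_pCons of_rat_minus of_rat_add)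
      (simp add: algebra_simps)
qed (use V in \<open>auto simp: seifert_form_def seifert_poly_mat_def\<close>)

lemma order_0_char_poly_seifert_form:
  assumes V: "V \<in> carrier_mat n n" and w: "norm w = 1"
  shows "order 0 (char_poly (seifert_form w V))
    = order 0 (map_poly (\<lambda>q. poly (map_poly of_rat q) w) (char_poly (seifert_poly_mat V)))"
proof -
  interpret ev: comm_ring_hom "\<lambda>q. poly (map_poly of_rat q) w"
    by (rule comm_ring_hom_poly_of_rat)
  have "seifert_form w V \<in> carrier_mat n n" "w \<noteq> 0"
    using V w by (auto simp: seifert_form_def)
  then have "order 0 (char_poly (seifert_form w V)) = order 0 (char_poly (w \<cdot>\<^sub>m seifert_form w V))"
    by (simp add: order_char_poly_smult)
  also have "\<dots> = order 0 (map_poly (\<lambda>q. poly (map_poly of_rat q) w) (char_poly (seifert_poly_mat V)))"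
    using V by (simp add: seifert_poly_mat_eval[OF V w, symmetric] ev.char_poly_hom[of _ n] seifert_poly_mat_def)
  finally show ?thesis .
qed

lemma order_0_char_poly_eval_conjugates:
  fixes A :: "rat poly mat" and p :: "rat poly" and x y :: "'a::field_char_0"
  assumes A: "A \<in> carrier_mat n n" and p: "irreducible p"
    and x: "poly (map_poly of_rat p) x = 0" and y: "poly (map_poly of_rat p) y = 0"
  shows "order 0 (map_poly (\<lambda>q. poly (map_poly of_rat q) x) (char_poly A))
    = order 0 (map_poly (\<lambda>q. poly (map_poly of_rat q) y) (char_poly A))"
proof -
  have nonzero: "map_poly (\<lambda>q. poly (map_poly of_rat q) z) (char_poly A) \<noteq> 0" for z :: 'a
  proof -
    interpret ev: comm_ring_hom "\<lambda>q. poly (map_poly of_rat q) z"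
      by (rule comm_ring_hom_poly_of_rat)
    have "monic (char_poly A)"
      using degree_monic_char_poly[OF A] by simp
    then have "coeff (map_poly (\<lambda>q. poly (map_poly of_rat q) z) (char_poly A)) (degree (char_poly A)) = 1"
      by (simp add: coeff_map_poly)
    then show ?thesis by (metis coeff_0 zero_neq_one)
  qed
  show ?thesis
    by (rule order_0_cong[OF nonzero nonzero])
      (simp add: coeff_map_poly root_iff_root_of_irreducible[OF p x y])
qed

lemma tristram_levine_sig_mod_2:
  assumes V: "V \<in> carrier_mat n n" and w: "norm w = 1"
  shows "tristram_levine_sig w V mod 2
    = (int n - int (order 0 (map_poly (\<lambda>q. poly (map_poly of_rat q) w) (char_poly (seifert_poly_mat V))))) mod 2"
proof -
  have "seifert_form w V \<in> carrier_mat n n"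
    using V by (simp add: seifert_form_def)
  then show ?thesis
    unfolding tristram_levine_sig_def
    using signature_hermitian_mod_2 hermitian_seifert_form[OF V] order_0_char_poly_seifert_form[OF V w]
    by simp
qed

theorem mainTheorem8:
  fixes V :: "int mat" and w w' :: complex and p :: "rat poly"
  assumes "seifert_matrix V"
    and "norm w = 1" and "norm w' = 1"
    and "irreducible p"
    and "poly (map_poly of_rat p) w = 0" and "poly (map_poly of_rat p) w' = 0"
  shows "tristram_levine_sig w V mod 2 = tristram_levine_sig w' V mod 2
    \<and> (w \<in> S_set \<and> w' \<in> S_set \<longrightarrow>
         \<not> (odd (tristram_levine_sig w' V) \<and> tristram_levine_sig w V = 0))"
proof -
  obtain n where V: "V \<in> carrier_mat n n"
    using assms(1) unfolding seifert_matrix_def by blast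
  have A: "seifert_poly_mat V \<in> carrier_mat n n"
    using V by (simp add: seifert_poly_mat_def)
  have "tristram_levine_sig w V mod 2 = tristram_levine_sig w' V mod 2"
    using tristram_levine_sig_mod_2[OF V assms(2)] tristram_levine_sig_mod_2[OF V assms(3)]
      order_0_char_poly_eval_conjugates[OF A assms(4-6)] by simp
  then show ?thesis
    by (auto simp: even_iff_mod_2_eq_zero)
qed

end
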